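(* For every odd integer $k\ge 5$, the graph $F_2(k)$ is word-representable.
   Context: For odd $k\ge5$, $F_2(k)$ is the split graph with clique $C=\{c_1,\dots,c_k\}$ and independent set $I=\{b,a_1,\dots,a_{k-1}\}$, where $N(b)=\{c_2,\dots,c_{k-1}\}$ and $N(a_i)=\{c_i,c_{i+1}\}$ for $1\le i\le k-1$. A graph $G=(V,E)$ is word-representable if there is a word $w$ over $V$ such that for all distinct $a,b\in V$, $ab\in E$ iff $a$ and $b$ alternate in $w$ (i.e. the subsequence of $w$ formed by all occurrences of $a$ and $b$ is $abab\cdots$ or $baba\cdots$). *)

theory Defs
  imports Main
begin

definition alternate :: "'a list \<Rightarrow> 'a \<Rightarrow> 'a \<Rightarrow> bool" where
  "alternate w a b \<longleftrightarrow>
     (let u = filter (\<lambda>x. x = a \<or> x = b) w in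
      \<forall>i. Suc i < length u \<longrightarrow> u ! i \<noteq> u ! Suc i)"

definition word_representable :: "'a set \<Rightarrow> ('a \<Rightarrow> 'a \<Rightarrow> bool) \<Rightarrow> bool" where
  "word_representable V E \<longleftrightarrow>
     (\<exists>w. set w = V \<and>
          (\<forall>a\<in>V. \<forall>b\<in>V. a \<noteq> b \<longrightarrow> (E a b \<longleftrightarrow> alternate w a b)))"

(* Vertices of F_2(k): clique vertices c_i, independent vertices a_i and b. *)
datatype F2v = Cv nat | Av nat | Bv

definition F2_vertices :: "nat \<Rightarrow> F2v set" where
  "F2_vertices k = Cv ` {1..k} \<union> Av ` {1..k-1} \<union> {Bv}"

definition F2_nbr :: "nat \<Rightarrow> F2v \<Rightarrow> F2v set" where
  "F2_nbr k v = (case v of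
       Bv \<Rightarrow> Cv ` {2..k-1}
     | Av i \<Rightarrow> {Cv i, Cv (Suc i)}
     | Cv _ \<Rightarrow> {})"

definition F2_edge :: "nat \<Rightarrow> F2v \<Rightarrow> F2v \<Rightarrow> bool" where
  "F2_edge k u v \<longleftrightarrow>
     u \<noteq> v \<and>
     ((\<exists>i j. u = Cv i \<and> v = Cv j) \<or>
      (v \<in> F2_nbr k u) \<or> (u \<in> F2_nbr k v))"

end

theory Submission
  imports Defs "HOL-Library.Sublist"
begin

(* Write the clique twice, c_1 ... c_k c_1 ... c_k, so that its vertices pairwise alternate, and
   wrap each a_i around a copy of the adjacent pair c_i c_(i+1): the first copy for even i, the
   second for odd i.  If two letters occur twice each, they alternate iff exactly one occurrence of
   one lies between the two occurrences of the other.  Hence a_i alternates exactly with c_i and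
   c_(i+1) and with no independent vertex, and b, whose two occurrences enclose c_2 ... c_(k-1) of
   the first copy, alternates exactly with those.  The block of a_(k-1) in the first copy encloses
   the second occurrence of b; a third occurrence of a_(k-1) at the end of the word breaks its
   alternation with b but not with c_(k-1) and c_k. *)

lemma count_list_distinct:
  "distinct xs \<Longrightarrow> count_list xs x = (if x \<in> set xs then 1 else 0)"
  by (induction xs) auto

lemma count_list_filter:
  "P x \<Longrightarrow> count_list (filter P xs) x = count_list xs x"
  by (induction xs) auto

lemma filter_eq_or_eq_if_notin:
  "x \<notin> set xs \<Longrightarrow> filter (\<lambda>z. z = x \<or> z = y) xs = replicate (count_list xs y) y"
  by (induction xs) auto

lemma alternate_iff_distinct_adj:
  "alternate w a b \<longleftrightarrow> distinct_adj (filter (\<lambda>x. x = a \<or> x = b) w)"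
  by (simp add: alternate_def Let_def distinct_adj_conv_nth)

lemma alternate_commute: "alternate w a b \<longleftrightarrow> alternate w b a"
  by (simp add: alternate_iff_distinct_adj disj_commute)

lemma alternate_filter:
  assumes "P a" "P b"
  shows "alternate (filter P w) a b \<longleftrightarrow> alternate w a b"
proof -
  have "filter (\<lambda>x. x = a \<or> x = b) (filter P w) = filter (\<lambda>x. x = a \<or> x = b) w"
    unfolding filter_filter using assms by (intro filter_cong) auto
  then show ?thesis
    by (simp add: alternate_iff_distinct_adj)
qed

lemma alternate_append_self:
  assumes "distinct xs" "a \<in> set xs" "b \<in> set xs" "a \<noteq> b"
  shows "alternate (xs @ xs) a b"
proof -
  let ?F = "filter (\<lambda>x. x = a \<or> x = b)"
  obtain u v where xs: "xs = u @ a # v"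
    using assms(2) by (meson split_list)
  have "?F xs = [a, b] \<or> ?F xs = [b, a]"
  proof (cases "b \<in> set v")
    case True
    then obtain s t where "xs = u @ a # s @ b # t"
      using xs by (auto dest: split_list)
    moreover have "?F u = []" "?F s = []" "?F t = []"
      using assms(1,4) calculation by (auto simp: filter_empty_conv)
    ultimately show ?thesis
      by simp
  next
    case False
    then have "b \<in> set u"
      using assms(3,4) xs by auto
    then obtain s t where "xs = s @ b # t @ a # v"
      using xs by (metis split_list append_Cons append_assoc)
    moreover have "?F s = []" "?F t = []" "?F v = []"
      using assms(1,4) calculation by (auto simp: filter_empty_conv)
    ultimately show ?thesis
      by simp
  qed
  then show ?thesis
    using assms(4) by (auto simp: alternate_iff_distinct_adj)
qed

lemma not_alternate_if_neither_between:
  assumes "w = p @ x # q @ x # r" "x \<notin> set q" "y \<notin> set q"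
  shows "\<not> alternate w x y"
proof -
  have "filter (\<lambda>z. z = x \<or> z = y) q = []"
    using assms(2,3) by (auto simp: filter_empty_conv)
  then show ?thesis
    using assms(1) by (simp add: alternate_iff_distinct_adj distinct_adj_append_iff)
qed

lemma alternate_iff_count_between:
  assumes w: "w = p @ x # q @ x # r"
    and "count_list w x = 2" "count_list w y = 2" "x \<noteq> y"
  shows "alternate w x y \<longleftrightarrow> count_list q y = 1"
proof -
  have "x \<notin> set p" "x \<notin> set q" "x \<notin> set r"
    using assms(2) unfolding w by (auto simp: count_list_0_iff[symmetric])
  then have filter_w: "filter (\<lambda>z. z = x \<or> z = y) w = replicate (count_list p y) y @
      x # replicate (count_list q y) y @ x # replicate (count_list r y) y"
    using w by (simp add: filter_eq_or_eq_if_notin)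
  have sum: "count_list p y + count_list q y + count_list r y = 2"
    using assms(3,4) unfolding w by simp
  have adj: "distinct_adj (replicate a y @ x # replicate b y @ x # replicate c y) \<longleftrightarrow> b = 1"
    if "a + b + c = 2" for a b c
  proof -
    have "(a, b, c) \<in> {(0,0,2), (0,1,1), (0,2,0), (1,0,1), (1,1,0), (2,0,0)}"
      using that by (auto simp: numeral_2_eq_2 add_is_1 add_is_0 add_eq_self_zero)
    then show ?thesis
      using \<open>x \<noteq> y\<close> by (auto simp: numeral_2_eq_2)
  qed
  show ?thesis
    unfolding alternate_iff_distinct_adj filter_w by (rule adj[OF sum])
qed

lemma concat_pairs_stride2:
  "a \<le> b \<Longrightarrow>
    concat (map (\<lambda>i. [i, Suc i]) (map (\<lambda>j. 2*j + d) [a..<b])) = [2*a + d..<2*b + d]"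
proof (induction b)
  case (Suc b)
  show ?case
  proof (cases "a \<le> b")
    case True
    then have "[2*a + d..<2 * Suc b + d] = [2*a + d..<2*b + d] @ [2*b + d, Suc (2*b + d)]"
      by simp
    with Suc True show ?thesis
      by simp
  next
    case False
    with Suc show ?thesis
      by simp
  qed
qed simp

lemma double_in_image_iff [simp]:
  "(i::nat) \<in> (\<lambda>j. 2*j) ` {a..<b} \<longleftrightarrow> even i \<and> 2*a \<le> i \<and> i < 2*b"
  by (auto elim!: evenE)

lemma Suc_double_in_image_iff [simp]:
  "(i::nat) \<in> (\<lambda>j. Suc (2*j)) ` {a..<b} \<longleftrightarrow> odd i \<and> 2*a < i \<and> i < Suc (2*b)"
  by (auto elim!: oddE)

lemma mem_F2_vertices_iff [simp]:
  "Cv j \<in> F2_vertices k \<longleftrightarrow> 1 \<le> j \<and> j \<le> k"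
  "Av i \<in> F2_vertices k \<longleftrightarrow> 1 \<le> i \<and> i \<le> k - 1"
  "Bv \<in> F2_vertices k"
  by (auto simp: F2_vertices_def)

lemma F2_edge_simps:
  "F2_edge k (Cv i) (Cv j) \<longleftrightarrow> i \<noteq> j"
  "F2_edge k (Av i) (Cv j) \<longleftrightarrow> j = i \<or> j = Suc i"
  "F2_edge k Bv (Cv j) \<longleftrightarrow> 2 \<le> j \<and> j \<le> k - 1"
  "\<not> F2_edge k (Av i) (Av j)"
  "\<not> F2_edge k (Av i) Bv"
  by (auto simp: F2_edge_def F2_nbr_def)

lemma F2_edge_commute: "F2_edge k u v \<longleftrightarrow> F2_edge k v u"
  by (auto simp: F2_edge_def)

definition block :: "nat \<Rightarrow> F2v list" where
  "block i = [Av i, Cv i, Cv (Suc i), Av i]"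

definition blocks :: "nat list \<Rightarrow> F2v list" where
  "blocks I = concat (map block I)"

lemma blocks_simps [simp]:
  "blocks [] = []"
  "blocks (i # I) = block i @ blocks I"
  "blocks (I @ J) = blocks I @ blocks J"
  by (simp_all add: blocks_def)

lemma Av_in_blocks_iff [simp]: "Av i \<in> set (blocks I) \<longleftrightarrow> i \<in> set I"
  by (induction I) (auto simp: block_def)

lemma Bv_notin_blocks [simp]: "Bv \<notin> set (blocks I)"
  by (induction I) (auto simp: block_def)

lemma count_blocks_Av: "count_list (blocks I) (Av i) = 2 * count_list I i"
  by (induction I) (auto simp: block_def)

lemma sublist_block_blocks: "i \<in> set I \<Longrightarrow> sublist (block i) (blocks I)"
  by (auto dest!: split_list)

lemma filter_clique_blocks:
  "filter (\<lambda>v. v \<in> range Cv) (blocks I) = map Cv (concat (map (\<lambda>i. [i, Suc i]) I))"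
  by (induction I) (auto simp: block_def)

lemma count_blocks_stride2_Cv:
  assumes "a \<le> b"
  shows "count_list (blocks (map (\<lambda>j. 2*j + d) [a..<b])) (Cv i) =
    (if 2*a + d \<le> i \<and> i < 2*b + d then 1 else 0)"
proof -
  have "count_list (blocks (map (\<lambda>j. 2*j + d) [a..<b])) (Cv i) =
      count_list (filter (\<lambda>v. v \<in> range Cv) (blocks (map (\<lambda>j. 2*j + d) [a..<b]))) (Cv i)"
    by (simp add: count_list_filter)
  also have "\<dots> = count_list (map Cv [2*a + d..<2*b + d]) (Cv i)"
    using assms by (simp only: filter_clique_blocks concat_pairs_stride2)
  also have "\<dots> = count_list [2*a + d..<2*b + d] i"
    by (simp add: count_list_map_conv inj_def)
  finally show ?thesis
    by (simp add: count_list_distinct)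
qed

definition F2_word :: "nat \<Rightarrow> F2v list" where
  "F2_word m =
     [Cv 1, Bv] @ blocks (map (\<lambda>j. 2*j) [1..<m]) @
     [Av (2*m), Cv (2*m), Bv, Cv (2*m+1), Av (2*m)] @
     blocks (map (\<lambda>j. 2*j + 1) [0..<m]) @ [Cv (2*m+1), Av (2*m)]"

lemma filter_clique_F2_word:
  assumes "1 \<le> m"
  shows "filter (\<lambda>v. v \<in> range Cv) (F2_word m) = map Cv [1..<2*m+2] @ map Cv [1..<2*m+2]"
proof -
  have "1 < 2*m"
    using assms by simp
  then have "[1..<2*m] = 1 # [2..<2*m]"
    by (simp add: upt_conv_Cons numeral_2_eq_2)
  then have "[1..<2*m+2] = 1 # [2..<2*m] @ [2*m, 2*m+1]"
    using assms by simp
  moreover have "[1..<2*m+2] = [1..<2*m+1] @ [2*m+1]"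
    by simp
  ultimately show ?thesis
    using concat_pairs_stride2[of 1 m 0] concat_pairs_stride2[of 0 m 1] assms
    by (auto simp: F2_word_def filter_clique_blocks)
qed

lemma set_F2_word:
  assumes "1 \<le> m"
  shows "set (F2_word m) = F2_vertices (2*m+1)"
proof (intro set_eqI)
  fix v
  show "v \<in> set (F2_word m) \<longleftrightarrow> v \<in> F2_vertices (2*m+1)"
  proof (cases v)
    case (Cv j)
    have "Cv j \<in> set (F2_word m) \<longleftrightarrow> Cv j \<in> set (filter (\<lambda>v. v \<in> range Cv) (F2_word m))"
      by simp
    with Cv assms show ?thesis
      by (auto simp: filter_clique_F2_word)
  next
    case (Av i)
    with assms show ?thesis
      by (auto simp: F2_word_def)
  qed (simp add: F2_word_def)
qed

lemma count_F2_word_Cv: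
  assumes "1 \<le> m" "1 \<le> j" "j \<le> 2*m+1"
  shows "count_list (F2_word m) (Cv j) = 2"
proof -
  have "count_list (F2_word m) (Cv j) =
      count_list (filter (\<lambda>v. v \<in> range Cv) (F2_word m)) (Cv j)"
    by (simp add: count_list_filter)
  also have "\<dots> = 2 * count_list [1..<2*m+2] j"
    using assms(1) by (simp add: filter_clique_F2_word count_list_map_conv inj_def)
  finally show ?thesis
    using assms(2,3) by (simp add: count_list_distinct)
qed

lemma count_F2_word_Av:
  assumes "1 \<le> i" "i < 2*m"
  shows "count_list (F2_word m) (Av i) = 2"
  using assms
  by (simp add: F2_word_def count_blocks_Av count_list_distinct distinct_map inj_on_def) presburger

lemma count_F2_word_Bv: "count_list (F2_word m) Bv = 2"
  by (simp add: F2_word_def)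

lemma sublist_block_F2_word:
  assumes "1 \<le> i" "i < 2*m"
  shows "sublist (block i) (F2_word m)"
proof -
  have "i \<in> set (map (\<lambda>j. 2*j) [1..<m]) \<or> i \<in> set (map (\<lambda>j. 2*j + 1) [0..<m])"
    using assms by auto
  then have "sublist (block i) (blocks (map (\<lambda>j. 2*j) [1..<m])) \<or>
      sublist (block i) (blocks (map (\<lambda>j. 2*j + 1) [0..<m]))"
    using sublist_block_blocks by blast
  then show ?thesis
    unfolding F2_word_def by (auto simp: sublist_append sublist_Cons_right)
qed

lemma F2_word_split_at_block:
  assumes "1 \<le> i" "i < 2*m"
  obtains p r where "F2_word m = p @ Av i # [Cv i, Cv (Suc i)] @ Av i # r"
  using sublist_block_F2_word[OF assms] unfolding sublist_def block_def by auto

lemma alternate_F2_word_Cv_Cv: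
  assumes "1 \<le> m" "1 \<le> i" "i \<le> 2*m+1" "1 \<le> j" "j \<le> 2*m+1" "i \<noteq> j"
  shows "alternate (F2_word m) (Cv i) (Cv j)"
proof -
  have "alternate (filter (\<lambda>v. v \<in> range Cv) (F2_word m)) (Cv i) (Cv j)"
    unfolding filter_clique_F2_word[OF assms(1)]
    using assms by (intro alternate_append_self) (auto simp: distinct_map inj_on_def)
  then show ?thesis
    by (simp add: alternate_filter)
qed

lemma not_alternate_F2_word_Av:
  assumes "1 \<le> i" "i \<le> 2*m" "y \<notin> {Av i, Cv i, Cv (Suc i)}"
  shows "\<not> alternate (F2_word m) (Av i) y"
proof (cases "i < 2*m")
  case True
  with assms(1) obtain p r where w: "F2_word m = p @ Av i # [Cv i, Cv (Suc i)] @ Av i # r"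
    by (rule F2_word_split_at_block)
  show ?thesis
    by (rule not_alternate_if_neither_between[OF w]) (use assms(3) in auto)
next
  case False
  then have i: "i = 2*m"
    using assms(2) by simp
  show ?thesis
  proof (cases "y = Bv")
    case True
    have w: "F2_word m = ([Cv 1, Bv] @ blocks (map (\<lambda>j. 2*j) [1..<m]) @
        [Av (2*m), Cv (2*m), Bv, Cv (2*m+1)]) @ Av (2*m) #
        (blocks (map (\<lambda>j. 2*j + 1) [0..<m]) @ [Cv (2*m+1)]) @ Av (2*m) # []"
      by (simp add: F2_word_def)
    show ?thesis
      unfolding i by (rule not_alternate_if_neither_between[OF w]) (use True in auto)
  next
    case False
    have w: "F2_word m = ([Cv 1, Bv] @ blocks (map (\<lambda>j. 2*j) [1..<m])) @ Av (2*m) #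
        [Cv (2*m), Bv, Cv (2*m+1)] @ Av (2*m) #
        (blocks (map (\<lambda>j. 2*j + 1) [0..<m]) @ [Cv (2*m+1), Av (2*m)])"
      by (simp add: F2_word_def)
    show ?thesis
      unfolding i by (rule not_alternate_if_neither_between[OF w]) (use False i assms(3) in auto)
  qed
qed

lemma alternate_F2_word_Av_Cv:
  assumes "2 \<le> m" "1 \<le> i" "i \<le> 2*m" "j = i \<or> j = Suc i"
  shows "alternate (F2_word m) (Av i) (Cv j)"
proof (cases "i < 2*m")
  case True
  with assms(2) obtain p r where w: "F2_word m = p @ Av i # [Cv i, Cv (Suc i)] @ Av i # r"
    by (rule F2_word_split_at_block)
  have "1 \<le> m" "1 \<le> j" "j \<le> 2*m+1"
    using assms by auto
  moreover have "count_list [Cv i, Cv (Suc i)] (Cv j) = 1"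
    using assms(4) by auto
  ultimately show ?thesis
    using alternate_iff_count_between[OF w count_F2_word_Av[OF assms(2) True] count_F2_word_Cv]
    by simp
next
  case False
  then have i: "i = 2*m"
    using assms(3) by simp
  have "count_list (blocks (map (\<lambda>j. 2*j) [1..<m])) (Cv j) = 0"
    using count_blocks_stride2_Cv[of 1 m 0] assms(1,4) i by auto
  moreover have "count_list (blocks (map (\<lambda>j. 2*j + 1) [0..<m])) (Cv j) = (if j = 2*m then 1 else 0)"
    using count_blocks_stride2_Cv[of 0 m 1] assms(1,4) i by auto
  ultimately have "filter (\<lambda>z. z = Av (2*m) \<or> z = Cv j) (F2_word m) =
      [Av (2*m), Cv j, Av (2*m), Cv j, Av (2*m)]"
    using assms i by (auto simp: F2_word_def filter_eq_or_eq_if_notin)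
  then show ?thesis
    unfolding i by (simp add: alternate_iff_distinct_adj)
qed

lemma alternate_F2_word_Av_iff:
  assumes "2 \<le> m" "1 \<le> i" "i \<le> 2*m" "v \<noteq> Av i"
  shows "alternate (F2_word m) (Av i) v \<longleftrightarrow> F2_edge (2*m+1) (Av i) v"
proof (cases "\<exists>j. v = Cv j \<and> (j = i \<or> j = Suc i)")
  case True
  then show ?thesis
    using alternate_F2_word_Av_Cv[OF assms(1-3)] by (auto simp: F2_edge_simps)
next
  case False
  with assms(4) have "v \<notin> {Av i, Cv i, Cv (Suc i)}"
    by auto
  then have "\<not> alternate (F2_word m) (Av i) v"
    by (rule not_alternate_F2_word_Av[OF assms(2,3)])
  moreover from False have "\<not> F2_edge (2*m+1) (Av i) v"
    by (cases v) (auto simp: F2_edge_simps)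
  ultimately show ?thesis
    by simp
qed

lemma alternate_F2_word_Bv_iff:
  assumes "2 \<le> m" "v \<in> F2_vertices (2*m+1)" "v \<noteq> Bv"
  shows "alternate (F2_word m) Bv v \<longleftrightarrow> F2_edge (2*m+1) Bv v"
proof (cases v)
  case (Cv j)
  have w: "F2_word m = [Cv 1] @ Bv # (blocks (map (\<lambda>j. 2*j) [1..<m]) @ [Av (2*m), Cv (2*m)]) @
      Bv # ([Cv (2*m+1), Av (2*m)] @ blocks (map (\<lambda>j. 2*j + 1) [0..<m]) @ [Cv (2*m+1), Av (2*m)])"
    by (simp add: F2_word_def)
  have "count_list (blocks (map (\<lambda>j. 2*j) [1..<m]) @ [Av (2*m), Cv (2*m)]) (Cv j) = 1 \<longleftrightarrow>
      2 \<le> j \<and> j \<le> 2*m"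
    using count_blocks_stride2_Cv[of 1 m 0] assms(1) by auto
  with Cv assms show ?thesis
    using alternate_iff_count_between[OF w count_F2_word_Bv count_F2_word_Cv]
    by (simp add: F2_edge_simps)
next
  case (Av i)
  with assms(2) have "\<not> alternate (F2_word m) (Av i) Bv"
    using not_alternate_F2_word_Av by simp
  with Av show ?thesis
    by (simp add: alternate_commute[of _ Bv] F2_edge_commute[of _ Bv] F2_edge_simps)
qed (use assms(3) in simp)

lemma alternate_F2_word_iff_F2_edge:
  assumes "2 \<le> m" "u \<in> F2_vertices (2*m+1)" "v \<in> F2_vertices (2*m+1)" "u \<noteq> v"
  shows "alternate (F2_word m) u v \<longleftrightarrow> F2_edge (2*m+1) u v"
proof -
  have independent: "alternate (F2_word m) u v \<longleftrightarrow> F2_edge (2*m+1) u v"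
    if "u \<notin> range Cv" "u \<in> F2_vertices (2*m+1)" "v \<in> F2_vertices (2*m+1)" "u \<noteq> v" for u v
    using that alternate_F2_word_Av_iff[OF assms(1)] alternate_F2_word_Bv_iff[OF assms(1)]
    by (cases u) auto
  show ?thesis
  proof (cases "u \<in> range Cv \<and> v \<in> range Cv")
    case True
    then show ?thesis
      using assms alternate_F2_word_Cv_Cv by (auto simp: F2_edge_simps)
  next
    case False
    then show ?thesis
      using assms independent[of u v] independent[of v u]
      by (auto simp: alternate_commute[of _ u] F2_edge_commute[of _ u])
  qed
qed

theorem lemma14:
  fixes k :: nat
  assumes "odd k" and "k \<ge> 5"
  shows "word_representable (F2_vertices k) (F2_edge k)"
proof -
  obtain m where k: "k = 2*m + 1"
    using \<open>odd k\<close> oddE by blast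
  with \<open>k \<ge> 5\<close> have "2 \<le> m"
    by simp
  then show ?thesis
    unfolding word_representable_def k
    by (intro exI[of _ "F2_word m"]) (simp add: set_F2_word alternate_F2_word_iff_F2_edge)
qed

end
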